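(* Let $X$ be a binary $N\times t$ matrix that is 3-good, let $S\subseteq[t]$ with $|S|=3$, $\mathbf{y}=r(X,S)$, $H=H(X,3,\mathbf{y})=([t],E)$, $L_1=\log_2\log_2 t$, $L_2=3L_1$. Let $G'=([t],E')$ be the graph in which distinct vertices $v_1,v_2$ are adjacent iff at least $L_2$ hyperedges of $E$ contain both, and let $E_1\subseteq E$ be the set of hyperedges containing some edge of $G'$ as a subset. For each $e\in E_1$ choose (arbitrarily) an additional vertex $v\in e$ such that $e\setminus\{v\}\in E'$. Let $G''=([t],E'')$ be the directed graph (without multiple arcs) containing, for every $e=\{v_1,v_2,v_3\}\in E_1$ with chosen additional vertex $v_1$, the arcs $(v_1,v_2),(v_1,v_3),(v_2,v_3),(v_3,v_2)$, and no other arcs. Then every vertex of $G''$ has out-degree less than $3L_1^2$.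
   Context: For a binary $N\times t$ matrix $X$ with columns $x(1),\dots,x(t)$ and $S\subseteq[t]$, $r(X,S)=\bigvee_{j\in S}x(j)$ (coordinatewise Boolean OR). For $\mathbf{y}\in\{0,1\}^N$, $H(X,3,\mathbf{y})$ is the $3$-uniform hypergraph on $[t]$ whose hyperedges are all $3$-element $S\subseteq[t]$ with $r(X,S)=\mathbf{y}$. A $(3,k)$ configuration of size $L$ is a set of $L$ hyperedges $e_1,\dots,e_L$ with a set $U$, $|U|=k$, such that $e_i\cap e_j=U$ for all $i\ne j$. Fix $p\in(0,1)$; $\Pr_1(s,w)$ is the probability that the OR of $s$ independent uniformly random length-$N$ binary columns of weight $\lfloor pN\rfloor$ equals a fixed vector of weight $w$; $\Pr_2(s,w_1,w)$ is the probability that the OR of $s$ such columns together with a fixed column $\mathbf{y}_1$ of weight $w_1$ equals a fixed vector $\mathbf{y}$ of weight $w$ with $\mathbf{y}\vee\mathbf{y}_1=\mathbf{y}$. With $L_1=\log_2\log_2 t$, $X$ is 3-good if: (1) for every $\mathbf{y}$, $H(X,3,\mathbf{y})$ has no $(3,1)$ configuration of size $L_1$; (2) for every $\mathbf{y}$ with $|\mathbf{y}|=w$, $H(X,3,\mathbf{y})$ has no $(3,0)$ configuration of size $10\max(t^3\Pr_1(3,w),N)$; (3) for all $\mathbf{y},\mathbf{y}_1$ with $\mathbf{y}\vee\mathbf{y}_1=\mathbf{y}$, $|\mathbf{y}_1|=w_1$, $|\mathbf{y}|=w$, the number of $j$ with $\mathbf{y}_1\vee x(j)=\mathbf{y}$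 is less than $10B(N,t)$, where $B(N,t)=t\Pr_2(1,w_1,w)$ if this exceeds $N$, $B(N,t)=N$ if $t^{-1/\sqrt{L_1}}\le t\Pr_2(1,w_1,w)\le N$, and $B(N,t)=L_1/10$ if $t\Pr_2(1,w_1,w)<t^{-1/\sqrt{L_1}}$; (4) for every $\mathbf{y}$ with $|\mathbf{y}|=w$ and integer $w_1\le w$, the number of pairwise disjoint pairs $\{j_1,j_2\}\subseteq[t]$ with $x(j_1)\vee x(j_2)\vee\mathbf{y}=\mathbf{y}$ and $|x(j_1)\vee x(j_2)|=w_1$ is less than $10\max(N,\binom{w}{w_1}t^2\Pr_1(2,w_1))$. *)

theory Defs
  imports Complex_Main "HOL-Library.FuncSet"
begin

text \<open>A binary N x t matrix is X :: nat => nat => bool, entry (i,j) = X i j for i < N, j < t.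
  Rows are indexed by {..<N}, columns by [t] = {..<t}. A binary vector of length N is
  identified with its support, a subset of {..<N}; Boolean OR is union, weight is card.\<close>

definition col :: "nat \<Rightarrow> (nat \<Rightarrow> nat \<Rightarrow> bool) \<Rightarrow> nat \<Rightarrow> nat set" where
  "col N X j = {i. i < N \<and> X i j}"

definition rX :: "nat \<Rightarrow> (nat \<Rightarrow> nat \<Rightarrow> bool) \<Rightarrow> nat set \<Rightarrow> nat set" where
  "rX N X S = (\<Union>j\<in>S. col N X j)"

definition Hedges :: "nat \<Rightarrow> nat \<Rightarrow> (nat \<Rightarrow> nat \<Rightarrow> bool) \<Rightarrow> nat set \<Rightarrow> nat set set" where
  "Hedges N t X y = {S. S \<subseteq> {..<t} \<and> card S = 3 \<and> rX N X S = y}"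

definition has_config :: "nat set set \<Rightarrow> nat \<Rightarrow> real \<Rightarrow> bool" where
  "has_config E k L = (\<exists>F U. F \<subseteq> E \<and> finite F \<and> real (card F) \<ge> L \<and> card U = k \<and>
      (\<forall>e\<in>F. U \<subseteq> e) \<and> (\<forall>e1\<in>F. \<forall>e2\<in>F. e1 \<noteq> e2 \<longrightarrow> e1 \<inter> e2 = U))"

definition wcols :: "nat \<Rightarrow> real \<Rightarrow> nat set set" where
  "wcols N p = {A. A \<subseteq> {..<N} \<and> card A = nat \<lfloor>p * real N\<rfloor>}"

text \<open>Pr_1(s,w): probability that the OR of s independent uniform random columns of weight
  floor(pN) equals a fixed vector of weight w (by symmetry, the vector with support {..<w}).\<close>
definition Pr1 :: "nat \<Rightarrow> real \<Rightarrow> nat \<Rightarrow> nat \<Rightarrow> real" where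
  "Pr1 N p s w = real (card {f \<in> {..<s} \<rightarrow>\<^sub>E wcols N p. (\<Union>i<s. f i) = {..<w}})
                 / real (card (wcols N p)) ^ s"

text \<open>Pr_2(s,w1,w): probability that y1 OR (OR of s random columns) equals y, for fixed
  y1 \<subseteq> y with |y1| = w1, |y| = w (by symmetry y1 = {..<w1}, y = {..<w}).\<close>
definition Pr2 :: "nat \<Rightarrow> real \<Rightarrow> nat \<Rightarrow> nat \<Rightarrow> nat \<Rightarrow> real" where
  "Pr2 N p s w1 w = real (card {f \<in> {..<s} \<rightarrow>\<^sub>E wcols N p. {..<w1} \<union> (\<Union>i<s. f i) = {..<w}})
                 / real (card (wcols N p)) ^ s"

definition L1 :: "nat \<Rightarrow> real" where
  "L1 t = log 2 (log 2 (real t))"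

definition Bnt :: "nat \<Rightarrow> nat \<Rightarrow> real \<Rightarrow> nat \<Rightarrow> nat \<Rightarrow> real" where
  "Bnt N t p w1 w =
     (let a = real t * Pr2 N p 1 w1 w in
      if a > real N then a
      else if real t powr (- 1 / sqrt (L1 t)) \<le> a then real N
      else L1 t / 10)"

definition good3 :: "nat \<Rightarrow> nat \<Rightarrow> real \<Rightarrow> (nat \<Rightarrow> nat \<Rightarrow> bool) \<Rightarrow> bool" where
  "good3 N t p X =
    ((\<forall>y. \<not> has_config (Hedges N t X y) 1 (L1 t)) \<and>
     (\<forall>y. y \<subseteq> {..<N} \<longrightarrow>
        \<not> has_config (Hedges N t X y) 0
             (10 * max (real t ^ 3 * Pr1 N p 3 (card y)) (real N))) \<and>
     (\<forall>y y1. y \<subseteq> {..<N} \<longrightarrow> y1 \<subseteq> y \<longrightarrow>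
        real (card {j \<in> {..<t}. y1 \<union> col N X j = y}) < 10 * Bnt N t p (card y1) (card y)) \<and>
     (\<forall>y w1. y \<subseteq> {..<N} \<longrightarrow> w1 \<le> card y \<longrightarrow>
        (\<forall>P. (\<forall>q\<in>P. q \<subseteq> {..<t} \<and> card q = 2 \<and> (\<Union>j\<in>q. col N X j) \<subseteq> y
                      \<and> card (\<Union>j\<in>q. col N X j) = w1) \<and>
             (\<forall>q1\<in>P. \<forall>q2\<in>P. q1 \<noteq> q2 \<longrightarrow> q1 \<inter> q2 = {}) \<longrightarrow>
           real (card P) < 10 * max (real N)
              (real (card y choose w1) * real t ^ 2 * Pr1 N p 2 w1))))"

definition codeg :: "nat set set \<Rightarrow> nat \<Rightarrow> nat \<Rightarrow> nat" where
  "codeg E u v = card {e\<in>E. {u, v} \<subseteq> e}"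

definition Gprime :: "nat \<Rightarrow> nat set set \<Rightarrow> real \<Rightarrow> nat set set" where
  "Gprime t E L = {{u, v} |u v. u < t \<and> v < t \<and> u \<noteq> v \<and> real (codeg E u v) \<ge> L}"

definition E1set :: "nat set set \<Rightarrow> nat set set \<Rightarrow> nat set set" where
  "E1set E E' = {e\<in>E. \<exists>d\<in>E'. d \<subseteq> e}"

definition arcs :: "nat set set \<Rightarrow> (nat set \<Rightarrow> nat) \<Rightarrow> (nat \<times> nat) set" where
  "arcs E1 c = {(c e, v) |e v. e \<in> E1 \<and> v \<in> e \<and> v \<noteq> c e} \<union>
               {(u, v) |e u v. e \<in> E1 \<and> u \<in> e - {c e} \<and> v \<in> e - {c e} \<and> u \<noteq> v}"

end

theory Submission
  imports Defs
begin

(* Hyperedges through a vertex x that pairwise meet only in x form a (3,1) configuration, so by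
   3-goodness there are at most K < L_1 of them.  Hence x has at most K heavy neighbours w, i.e.
   with codegree(x, w) > 2K: each of K + 1 such w has more than 2K third vertices, so distinct
   third vertices outside these K + 1 can be chosen greedily, giving K + 1 such hyperedges.
   An arc (v, w) of G'' either joins the two unchosen vertices of a hyperedge, which form an edge
   of G', so w is a heavy neighbour of v; or v is the chosen vertex of e and w lies in the G'-edge
   e - {v} of the link of v.  A maximal disjoint family of such link edges again gives hyperedges
   through v meeting only in v, so it covers at most 2K vertices and meets every link edge; hence
   w is a heavy neighbour of v or of one of these 2K vertices, and the out-degree is at most
   K + 2K^2 < 3 L_1^2. *)

definition sunflower :: "'a set set \<Rightarrow> 'a set \<Rightarrow> bool" where
  "sunflower F U \<longleftrightarrow> (\<forall>e\<in>F. U \<subseteq> e) \<and> (\<forall>e1\<in>F. \<forall>e2\<in>F. e1 \<noteq> e2 \<longrightarrow> e1 \<inter> e2 = U)"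

definition heavy_nbrs :: "nat set set \<Rightarrow> real \<Rightarrow> nat \<Rightarrow> nat set" where
  "heavy_nbrs E \<theta> u = {w. w \<noteq> u \<and> \<theta> \<le> real (codeg E u w)}"

lemma has_config_if_nonpos:
  assumes "L \<le> 0"
  shows "has_config E k L"
  unfolding has_config_def using assms by (intro exI[of _ "{}"] exI[of _ "{..<k}"]) auto

lemma card_sunflower_less_if_no_config:
  assumes "\<not> has_config E k L" "finite E" "F \<subseteq> E" "sunflower F U" "card U = k"
  shows "real (card F) < L"
proof (rule ccontr)
  assume "\<not> real (card F) < L"
  then have "has_config E k L"
    using assms(2-5) finite_subset unfolding has_config_def sunflower_def
    by (intro exI[of _ F] exI[of _ U]) auto
  with assms(1) show False ..
qed

lemma sunflower_card_bound_if_no_config: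
  assumes "\<not> has_config E 1 L" "finite E"
  obtains K :: nat where "real K < L" "\<forall>x. \<forall>F\<subseteq>E. sunflower F {x} \<longrightarrow> card F \<le> K"
proof -
  have "0 < L"
    using assms(1) has_config_if_nonpos by (meson not_le)
  then obtain K where K: "nat \<lceil>L\<rceil> = Suc K"
    using gr0_implies_Suc by fastforce
  have less_L_iff: "real n < L \<longleftrightarrow> n \<le> K" for n
    using K less_ceiling_iff[of "int n" L] by linarith
  have "card F \<le> K" if "F \<subseteq> E" "sunflower F {x}" for F x
    using less_L_iff card_sunflower_less_if_no_config[OF assms that] by simp
  moreover have "real K < L"
    using less_L_iff by simp
  ultimately show ?thesis
    using that by blast
qed

lemma add_twice_square_less_three_squares:
  assumes "real K < L"
  shows "real (K + 2 * K * K) < 3 * L\<^sup>2"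
proof (cases "K = 0")
  case True
  then show ?thesis
    using assms by simp
next
  case False
  then have "real (K + 2 * K * K) \<le> 3 * real K ^ 2"
    by (simp add: power2_eq_square)
  also have "\<dots> < 3 * L\<^sup>2"
    using assms by (simp add: power_strict_mono)
  finally show ?thesis .
qed

lemma inj_on_choice_if_card_ge:
  assumes "finite A" "\<forall>a\<in>A. card A \<le> card (S a)"
  shows "\<exists>f. inj_on f A \<and> (\<forall>a\<in>A. f a \<in> S a)"
  using assms
proof (induction A rule: finite_induct)
  case empty
  then show ?case by auto
next
  case (insert a A)
  then obtain f where f: "inj_on f A" "\<forall>b\<in>A. f b \<in> S b"
    by fastforce
  have "card (f ` A) < card (S a)"
    using insert card_image_le[OF insert(1), of f] by auto
  then have "\<not> S a \<subseteq> f ` A"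
    using card_mono[OF finite_imageI[OF insert(1)]] by (meson not_le)
  then obtain z where z: "z \<in> S a" "z \<notin> f ` A"
    by blast
  have "inj_on (f(a := z)) (insert a A)"
    using f(1) z(2) insert(2) by (auto simp: inj_on_def image_iff)
  moreover have "\<forall>b\<in>insert a A. (f(a := z)) b \<in> S b"
    using f(2) z(1) insert(2) by auto
  ultimately show ?case by blast
qed

lemma exists_maximal_disjoint_subfamily:
  assumes "finite Q"
  shows "\<exists>P\<subseteq>Q. pairwise disjnt P \<and> (\<forall>q\<in>Q. q \<noteq> {} \<longrightarrow> \<not> disjnt q (\<Union>P))"
  using assms
proof (induction Q rule: finite_induct)
  case empty
  then show ?case by auto
next
  case (insert q Q)
  then obtain P where P: "P \<subseteq> Q" "pairwise disjnt P" "\<forall>q\<in>Q. q \<noteq> {} \<longrightarrow> \<not> disjnt q (\<Union>P)"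
    by blast
  show ?case
  proof (cases "disjnt q (\<Union>P)")
    case True
    then have "\<forall>y\<in>P. disjnt q y \<and> disjnt y q"
      by (meson Union_upper disjnt_subset2 disjnt_sym)
    then have "pairwise disjnt (insert q P)"
      using P(2) by (simp add: pairwise_insert)
    moreover have "\<forall>q'\<in>insert q Q. q' \<noteq> {} \<longrightarrow> \<not> disjnt q' (\<Union>(insert q P))"
      using P(3) unfolding disjnt_def by blast
    ultimately show ?thesis
      using P(1) by (intro exI[of _ "insert q P"]) auto
  next
    case False
    then show ?thesis
      using P by auto
  qed
qed

lemma card_Un_UN_le:
  assumes "finite I" "\<And>i. card (A i) \<le> K"
  shows "card (A j \<union> (\<Union>i\<in>I. A i)) \<le> K + card I * K"
proof -
  have "card (A j \<union> (\<Union>i\<in>I. A i)) \<le> card (A j) + (\<Sum>i\<in>I. card (A i))"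
    using card_Un_le[of "A j"] add_left_mono[OF card_UN_le[OF assms(1)]] by (rule le_trans)
  also have "\<dots> \<le> K + card I * K"
    using assms(2) sum_bounded_above[of I "\<lambda>i. card (A i)" K] by (intro add_mono) auto
  finally show ?thesis .
qed

lemma finite_Union_if_card_eq:
  assumes "finite E" "\<forall>e\<in>E. card e = Suc k"
  shows "finite (\<Union>E)"
  using assms by (metis card.infinite finite_Union nat.distinct(1))

lemma codeg_commute: "codeg E u w = codeg E w u"
  unfolding codeg_def by (simp add: insert_commute)

lemma Gprime_memE:
  assumes "q \<in> Gprime t E \<theta>"
  obtains a b where "q = {a, b}" "b \<in> heavy_nbrs E \<theta> a" "a \<in> heavy_nbrs E \<theta> b"
  using assms codeg_commute unfolding Gprime_def heavy_nbrs_def by fastforce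

lemma card_Gprime_mem: "q \<in> Gprime t E \<theta> \<Longrightarrow> card q = 2"
  unfolding Gprime_def by auto

lemma finite_heavy_nbrs:
  assumes "finite (\<Union>E)" "0 < \<theta>"
  shows "finite (heavy_nbrs E \<theta> u)"
proof (rule finite_subset[OF _ assms(1)])
  show "heavy_nbrs E \<theta> u \<subseteq> \<Union>E"
  proof
    fix w assume "w \<in> heavy_nbrs E \<theta> u"
    then have "codeg E u w \<noteq> 0"
      using assms(2) unfolding heavy_nbrs_def by auto
    then obtain e where "e \<in> E" "{u, w} \<subseteq> e"
      unfolding codeg_def by (metis (no_types, lifting) card.empty empty_Collect_eq)
    then show "w \<in> \<Union>E" by blast
  qed
qed

lemma codeg_le_card_third_vertices:
  assumes "finite E" "\<forall>e\<in>E. card e = 3" "x \<noteq> a"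
  shows "codeg E x a \<le> card {z. z \<notin> {x, a} \<and> {x, a, z} \<in> E}"
proof -
  define T where "T = {z. z \<notin> {x, a} \<and> {x, a, z} \<in> E}"
  have "finite (\<Union>E)"
    using finite_Union_if_card_eq[of E 2] assms(1,2) by (simp add: numeral_3_eq_3)
  then have "finite T"
    by (rule rev_finite_subset) (auto simp: T_def)
  have "{e\<in>E. {x, a} \<subseteq> e} \<subseteq> (\<lambda>z. {x, a, z}) ` T"
  proof
    fix e assume e: "e \<in> {e\<in>E. {x, a} \<subseteq> e}"
    then have "card e = 3"
      using assms(2) by blast
    then have "finite e"
      by (simp add: card_ge_0_finite)
    then have "card (e - {x, a}) = 1"
      using e assms(3) \<open>card e = 3\<close> by (simp add: card_Diff_subset)
    then obtain z where z: "e - {x, a} = {z}"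
      by (meson card_1_singletonE)
    then have "e = {x, a, z}" "z \<notin> {x, a}"
      using e by auto
    then show "e \<in> (\<lambda>z. {x, a, z}) ` T"
      using e unfolding T_def by auto
  qed
  then have "codeg E x a \<le> card ((\<lambda>z. {x, a, z}) ` T)"
    unfolding codeg_def using \<open>finite T\<close> by (simp add: card_mono)
  also have "\<dots> \<le> card T"
    by (rule card_image_le[OF \<open>finite T\<close>])
  finally show ?thesis
    unfolding T_def .
qed

lemma sunflower_of_third_vertices:
  assumes "x \<notin> A" "inj_on f A" "\<forall>a\<in>A. f a \<notin> insert x A"
  shows "sunflower ((\<lambda>a. {x, a, f a}) ` A) {x}"
    and "inj_on (\<lambda>a. {x, a, f a}) A"
proof -
  have meet: "{x, a, f a} \<inter> {x, b, f b} = {x}" if "a \<in> A" "b \<in> A" "a \<noteq> b" for a b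
    using that assms inj_onD[OF assms(2)] by fastforce
  show "sunflower ((\<lambda>a. {x, a, f a}) ` A) {x}"
    unfolding sunflower_def
  proof (intro conjI ballI impI)
    fix e1 e2 assume "e1 \<in> (\<lambda>a. {x, a, f a}) ` A" "e2 \<in> (\<lambda>a. {x, a, f a}) ` A" "e1 \<noteq> e2"
    then obtain a b where "a \<in> A" "b \<in> A" "e1 = {x, a, f a}" "e2 = {x, b, f b}" "a \<noteq> b"
      by blast
    then show "e1 \<inter> e2 = {x}"
      using meet by simp
  qed auto
  show "inj_on (\<lambda>a. {x, a, f a}) A"
  proof (rule inj_onI)
    fix a b assume "a \<in> A" "b \<in> A" "{x, a, f a} = {x, b, f b}"
    then have "a \<in> {x, b, f b}" "a \<noteq> x" "a \<noteq> f b"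
      using assms(1,3) by auto
    then show "a = b"
      by simp
  qed
qed

lemma card_heavy_nbrs_le:
  assumes "finite E" "\<forall>e\<in>E. card e = 3"
    and "\<forall>F\<subseteq>E. sunflower F {x} \<longrightarrow> card F \<le> K" and "real (2 * K) < \<theta>"
  shows "card (heavy_nbrs E \<theta> x) \<le> K"
proof (rule ccontr)
  assume "\<not> card (heavy_nbrs E \<theta> x) \<le> K"
  then obtain A where A: "A \<subseteq> heavy_nbrs E \<theta> x" "card A = Suc K"
    by (meson not_le Suc_leI obtain_subset_with_card_n)
  have "finite A"
    using A(2) by (simp add: card_ge_0_finite)
  have "x \<notin> A"
    using A(1) unfolding heavy_nbrs_def by blast
  define T where "T a = {z. z \<notin> {x, a} \<and> {x, a, z} \<in> E}" for a
  have "\<forall>a\<in>A. card A \<le> card (T a - A)"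
  proof
    fix a assume "a \<in> A"
    have "\<theta> \<le> real (codeg E x a)"
      using A(1) \<open>a \<in> A\<close> unfolding heavy_nbrs_def by blast
    then have "2 * K < codeg E x a"
      using assms(4) by (simp only: of_nat_less_iff[symmetric])
    also have "codeg E x a \<le> card (T a)"
      unfolding T_def using A(1) \<open>a \<in> A\<close> assms(1,2)
      by (intro codeg_le_card_third_vertices) (auto simp: heavy_nbrs_def)
    finally have "2 * K < card (T a)" .
    moreover have "T a - A = T a - (A - {a})"
      unfolding T_def by auto
    moreover have "card (T a) - card (A - {a}) \<le> card (T a - (A - {a}))"
      using \<open>finite A\<close> by (intro diff_card_le_card_Diff) simp
    moreover have "card (A - {a}) = K"
      using A(2) \<open>a \<in> A\<close> by simp
    ultimately show "card A \<le> card (T a - A)"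
      using A(2) by arith
  qed
  then have "\<exists>f. inj_on f A \<and> (\<forall>a\<in>A. f a \<in> T a - A)"
    by (rule inj_on_choice_if_card_ge[OF \<open>finite A\<close>])
  then obtain f where f: "inj_on f A" "\<forall>a\<in>A. f a \<in> T a - A"
    by blast
  have "f a \<notin> insert x A" if "a \<in> A" for a
    using f(2) that unfolding T_def by auto
  then have "sunflower ((\<lambda>a. {x, a, f a}) ` A) {x}" "inj_on (\<lambda>a. {x, a, f a}) A"
    using sunflower_of_third_vertices[OF \<open>x \<notin> A\<close> f(1)] by auto
  moreover have "(\<lambda>a. {x, a, f a}) ` A \<subseteq> E"
    using f(2) unfolding T_def by auto
  ultimately have "card ((\<lambda>a. {x, a, f a}) ` A) \<le> K"
    using assms(3) by blast
  with A(2) \<open>inj_on (\<lambda>a. {x, a, f a}) A\<close> show False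
    by (simp add: card_image)
qed

lemma card_Union_link_pairs_le:
  assumes "\<forall>F\<subseteq>E. sunflower F {v} \<longrightarrow> card F \<le> K" "pairwise disjnt P"
    and "\<forall>q\<in>P. card q = 2 \<and> v \<notin> q \<and> insert v q \<in> E"
  shows "card (\<Union>P) \<le> 2 * K"
proof -
  have "sunflower (insert v ` P) {v}" "inj_on (insert v) P"
    using assms(2,3) by (auto simp: sunflower_def pairwise_def disjnt_def inj_on_def)
  moreover have "insert v ` P \<subseteq> E"
    using assms(3) by blast
  ultimately have "card (insert v ` P) \<le> K" "inj_on (insert v) P"
    using assms(1) by blast+
  then have "card P \<le> K"
    by (simp add: card_image)
  moreover have "card (\<Union>P) \<le> 2 * card P"
    using card_Union_le_sum_card[of P] assms(3) by simp
  ultimately show ?thesis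
    by linarith
qed

lemma heavy_nbr_of_pair_meeting:
  assumes "P \<subseteq> Gprime t E \<theta>" "q \<in> Gprime t E \<theta>" "\<not> disjnt q (\<Union>P)" "w \<in> q"
  shows "\<exists>u\<in>\<Union>P. w \<in> heavy_nbrs E \<theta> u"
proof (cases "w \<in> \<Union>P")
  case True
  then obtain q' where "q' \<in> P" "w \<in> q'"
    by blast
  moreover obtain a b where "q' = {a, b}" "b \<in> heavy_nbrs E \<theta> a" "a \<in> heavy_nbrs E \<theta> b"
    using Gprime_memE assms(1) \<open>q' \<in> P\<close> by blast
  ultimately show ?thesis
    by blast
next
  case False
  obtain y where "y \<in> q" "y \<in> \<Union>P"
    using assms(3) unfolding disjnt_def by blast
  moreover obtain a b where "q = {a, b}" "b \<in> heavy_nbrs E \<theta> a" "a \<in> heavy_nbrs E \<theta> b"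
    using Gprime_memE assms(2) by blast
  ultimately show ?thesis
    using False assms(4) by blast
qed

lemma out_arcs_subset_heavy_nbrs:
  assumes "\<forall>e\<in>E1set E (Gprime t E \<theta>). c e \<in> e \<and> e - {c e} \<in> Gprime t E \<theta>"
    and "P \<subseteq> Gprime t E \<theta>"
    and "\<And>q. q \<in> Gprime t E \<theta> \<Longrightarrow> v \<notin> q \<Longrightarrow> insert v q \<in> E \<Longrightarrow> \<not> disjnt q (\<Union>P)"
  shows "{w. (v, w) \<in> arcs (E1set E (Gprime t E \<theta>)) c}
      \<subseteq> heavy_nbrs E \<theta> v \<union> (\<Union>u\<in>\<Union>P. heavy_nbrs E \<theta> u)"
proof
  fix w assume "w \<in> {w. (v, w) \<in> arcs (E1set E (Gprime t E \<theta>)) c}"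
  then consider (center) e where "e \<in> E1set E (Gprime t E \<theta>)" "v = c e" "w \<in> e" "w \<noteq> v"
    | (pair) e where "e \<in> E1set E (Gprime t E \<theta>)" "v \<in> e - {c e}" "w \<in> e - {c e}" "v \<noteq> w"
    unfolding arcs_def by blast
  then show "w \<in> heavy_nbrs E \<theta> v \<union> (\<Union>u\<in>\<Union>P. heavy_nbrs E \<theta> u)"
  proof cases
    case center
    have "e \<in> E" "v \<in> e" "e - {v} \<in> Gprime t E \<theta>"
      using center(1,2) assms(1) unfolding E1set_def by auto
    moreover have "insert v (e - {v}) \<in> E"
      using \<open>e \<in> E\<close> \<open>v \<in> e\<close> by (simp add: insert_absorb)
    ultimately have "\<not> disjnt (e - {v}) (\<Union>P)"
      using assms(3)[of "e - {v}"] by blast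
    then have "\<exists>u\<in>\<Union>P. w \<in> heavy_nbrs E \<theta> u"
      using heavy_nbr_of_pair_meeting[OF assms(2) \<open>e - {v} \<in> Gprime t E \<theta>\<close>] center(3,4) by blast
    then show ?thesis
      by blast
  next
    case pair
    then have "e - {c e} \<in> Gprime t E \<theta>"
      using assms(1) by blast
    then obtain a b where "e - {c e} = {a, b}"
      "b \<in> heavy_nbrs E \<theta> a" "a \<in> heavy_nbrs E \<theta> b"
      by (rule Gprime_memE)
    then have "w \<in> heavy_nbrs E \<theta> v"
      using pair(2-4) by auto
    then show ?thesis
      by blast
  qed
qed

lemma card_out_arcs_le:
  fixes E :: "nat set set" and \<theta> :: real
  assumes "finite E" "\<forall>e\<in>E. card e = 3"
    and "\<forall>x. \<forall>F\<subseteq>E. sunflower F {x} \<longrightarrow> card F \<le> K" and "real (2 * K) < \<theta>"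
    and "\<forall>e\<in>E1set E (Gprime t E \<theta>). c e \<in> e \<and> e - {c e} \<in> Gprime t E \<theta>"
  shows "card {w. (v, w) \<in> arcs (E1set E (Gprime t E \<theta>)) c} \<le> K + 2 * K * K"
proof -
  define Q where "Q = {q \<in> Gprime t E \<theta>. v \<notin> q \<and> insert v q \<in> E}"
  have "finite (\<Union>E)"
    using finite_Union_if_card_eq[of E 2] assms(1,2) by (simp add: numeral_3_eq_3)
  then have "finite Q"
    by (rule rev_finite_subset[OF finite_Pow_iff[THEN iffD2]]) (auto simp: Q_def)
  then obtain P where P: "P \<subseteq> Q" "pairwise disjnt P"
    and meets_P: "\<forall>q\<in>Q. q \<noteq> {} \<longrightarrow> \<not> disjnt q (\<Union>P)"
    using exists_maximal_disjoint_subfamily by blast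
  have "P \<subseteq> Gprime t E \<theta>"
    using P(1) unfolding Q_def by blast
  have "card (\<Union>P) \<le> 2 * K"
    using assms(3) P(2) P(1) card_Gprime_mem unfolding Q_def
    by (intro card_Union_link_pairs_le) auto
  have "finite (\<Union>P)"
    using \<open>finite (\<Union>E)\<close> by (rule rev_finite_subset) (use P(1) in \<open>auto simp: Q_def\<close>)
  have "finite (heavy_nbrs E \<theta> u)" for u
    using \<open>finite (\<Union>E)\<close> assms(4) by (intro finite_heavy_nbrs) linarith+
  then have "finite (heavy_nbrs E \<theta> v \<union> (\<Union>u\<in>\<Union>P. heavy_nbrs E \<theta> u))"
    using \<open>finite (\<Union>P)\<close> by blast
  moreover have "{w. (v, w) \<in> arcs (E1set E (Gprime t E \<theta>)) c}
      \<subseteq> heavy_nbrs E \<theta> v \<union> (\<Union>u\<in>\<Union>P. heavy_nbrs E \<theta> u)"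
  proof (rule out_arcs_subset_heavy_nbrs[OF assms(5) \<open>P \<subseteq> Gprime t E \<theta>\<close>])
    fix q assume "q \<in> Gprime t E \<theta>" "v \<notin> q" "insert v q \<in> E"
    then show "\<not> disjnt q (\<Union>P)"
      using meets_P card_Gprime_mem unfolding Q_def by fastforce
  qed
  ultimately have "card {w. (v, w) \<in> arcs (E1set E (Gprime t E \<theta>)) c}
      \<le> card (heavy_nbrs E \<theta> v \<union> (\<Union>u\<in>\<Union>P. heavy_nbrs E \<theta> u))"
    by (rule card_mono)
  also have "\<dots> \<le> K + card (\<Union>P) * K"
    using \<open>finite (\<Union>P)\<close> card_heavy_nbrs_le[OF assms(1,2) assms(3)[THEN spec] assms(4)]
    by (rule card_Un_UN_le)
  also have "\<dots> \<le> K + 2 * K * K"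
    using \<open>card (\<Union>P) \<le> 2 * K\<close> by simp
  finally show ?thesis .
qed

lemma finite_Hedges: "finite (Hedges N t X y)"
  by (rule finite_subset[of _ "Pow {..<t}"]) (auto simp: Hedges_def)

theorem lemma5:
  fixes N t :: nat and p :: real and X :: "nat \<Rightarrow> nat \<Rightarrow> bool"
    and S :: "nat set" and c :: "nat set \<Rightarrow> nat"
  assumes "0 < p" and "p < 1"
    and "good3 N t p X"
    and "S \<subseteq> {..<t}" and "card S = 3"
    and "\<forall>e \<in> E1set (Hedges N t X (rX N X S))
              (Gprime t (Hedges N t X (rX N X S)) (3 * L1 t)).
           c e \<in> e \<and> e - {c e} \<in> Gprime t (Hedges N t X (rX N X S)) (3 * L1 t)"
  shows "\<forall>v < t. real (card {w. (v, w) \<in> arcs (E1set (Hedges N t X (rX N X S))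
              (Gprime t (Hedges N t X (rX N X S)) (3 * L1 t))) c}) < 3 * (L1 t)^2"
proof (intro allI impI)
  fix v
  define E where "E = Hedges N t X (rX N X S)"
  define L where "L = L1 t"
  have "finite E"
    unfolding E_def by (rule finite_Hedges)
  have "\<forall>e\<in>E. card e = 3"
    unfolding E_def Hedges_def by blast
  have "\<not> has_config E 1 L"
    using conjunct1[OF assms(3)[unfolded good3_def]] unfolding E_def L_def by (rule spec)
  then obtain K where "real K < L" and sunflower_bound: "\<forall>x. \<forall>F\<subseteq>E. sunflower F {x} \<longrightarrow> card F \<le> K"
    using \<open>finite E\<close> by (rule sunflower_card_bound_if_no_config)
  then have "real (2 * K) < 3 * L"
    by simp
  moreover have "\<forall>e\<in>E1set E (Gprime t E (3 * L)). c e \<in> e \<and> e - {c e} \<in> Gprime t E (3 * L)"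
    using assms(6) unfolding E_def L_def .
  ultimately have "card {w. (v, w) \<in> arcs (E1set E (Gprime t E (3 * L))) c} \<le> K + 2 * K * K"
    using card_out_arcs_le \<open>finite E\<close> \<open>\<forall>e\<in>E. card e = 3\<close> sunflower_bound by blast
  then have "real (card {w. (v, w) \<in> arcs (E1set E (Gprime t E (3 * L))) c}) < 3 * L\<^sup>2"
    using add_twice_square_less_three_squares[OF \<open>real K < L\<close>] by linarith
  then show "real (card {w. (v, w) \<in> arcs (E1set (Hedges N t X (rX N X S))
      (Gprime t (Hedges N t X (rX N X S)) (3 * L1 t))) c}) < 3 * (L1 t)^2"
    unfolding E_def L_def .
qed

end
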